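(* Let $G$ be a simple graph on $n$ vertices with at least one edge that is both vertex-transitive and edge-transitive, and suppose $\alpha(G)\,\omega(G)=n$. Then $G$ is $k$-regular for some $k$ and $$\lambda(G)=-\frac{k}{\omega(G)-1}.$$
   Context: $\lambda(G)$ is the smallest adjacency eigenvalue, $\alpha(G)$ the independence number and $\omega(G)$ the clique number of $G$. *)

theory Defs
  imports "HOL-Analysis.Analysis"
begin

text \<open>Simple graphs on a finite vertex type 'n (so n = CARD('n)),
 given by an adjacency relation E.\<close>

definition simple_graph :: "('n \<Rightarrow> 'n \<Rightarrow> bool) \<Rightarrow> bool" where
  "simple_graph E \<longleftrightarrow> (\<forall>x y. E x y \<longrightarrow> E y x) \<and> (\<forall>x. \<not> E x x)"

definition has_edge :: "('n \<Rightarrow> 'n \<Rightarrow> bool) \<Rightarrow> bool" where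
  "has_edge E \<longleftrightarrow> (\<exists>x y. E x y)"

definition automorphism :: "('n \<Rightarrow> 'n \<Rightarrow> bool) \<Rightarrow> ('n \<Rightarrow> 'n) \<Rightarrow> bool" where
  "automorphism E \<sigma> \<longleftrightarrow> bij \<sigma> \<and> (\<forall>x y. E (\<sigma> x) (\<sigma> y) \<longleftrightarrow> E x y)"

definition vertex_transitive :: "('n \<Rightarrow> 'n \<Rightarrow> bool) \<Rightarrow> bool" where
  "vertex_transitive E \<longleftrightarrow> (\<forall>x y. \<exists>\<sigma>. automorphism E \<sigma> \<and> \<sigma> x = y)"

definition edge_transitive :: "('n \<Rightarrow> 'n \<Rightarrow> bool) \<Rightarrow> bool" where
  "edge_transitive E \<longleftrightarrow>
     (\<forall>x y u v. E x y \<longrightarrow> E u v \<longrightarrow>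
        (\<exists>\<sigma>. automorphism E \<sigma> \<and> \<sigma> ` {x, y} = {u, v}))"

definition independent_set :: "('n \<Rightarrow> 'n \<Rightarrow> bool) \<Rightarrow> 'n set \<Rightarrow> bool" where
  "independent_set E S \<longleftrightarrow> (\<forall>x\<in>S. \<forall>y\<in>S. \<not> E x y)"

definition clique :: "('n \<Rightarrow> 'n \<Rightarrow> bool) \<Rightarrow> 'n set \<Rightarrow> bool" where
  "clique E S \<longleftrightarrow> (\<forall>x\<in>S. \<forall>y\<in>S. x \<noteq> y \<longrightarrow> E x y)"

definition independence_number :: "('n::finite \<Rightarrow> 'n \<Rightarrow> bool) \<Rightarrow> nat" where
  "independence_number E = Max {card S | S. independent_set E S}"

definition clique_number :: "('n::finite \<Rightarrow> 'n \<Rightarrow> bool) \<Rightarrow> nat" where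
  "clique_number E = Max {card S | S. clique E S}"

definition regular :: "('n::finite \<Rightarrow> 'n \<Rightarrow> bool) \<Rightarrow> nat \<Rightarrow> bool" where
  "regular E k \<longleftrightarrow> (\<forall>x. card {y. E x y} = k)"

definition adjacency_matrix :: "('n::finite \<Rightarrow> 'n \<Rightarrow> bool) \<Rightarrow> real^'n^'n" where
  "adjacency_matrix E = (\<chi> i j. if E i j then 1 else 0)"

text \<open>Eigenvalues of the (real symmetric) adjacency matrix; all of them are real.\<close>
definition adj_eigenvalue :: "('n::finite \<Rightarrow> 'n \<Rightarrow> bool) \<Rightarrow> real \<Rightarrow> bool" where
  "adj_eigenvalue E l \<longleftrightarrow> (\<exists>v::real^'n. v \<noteq> 0 \<and> adjacency_matrix E *v v = l *\<^sub>R v)"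

definition smallest_eigenvalue :: "('n::finite \<Rightarrow> 'n \<Rightarrow> bool) \<Rightarrow> real" where
  "smallest_eigenvalue E = Min {l. adj_eigenvalue E l}"

end

theory Submission
  imports Defs
begin

text \<open>Let \<open>C\<close> be a maximum clique and \<open>v\<close> any vector. Summing \<open>(\<Sum>x\<in>C. v (\<sigma> x))\<^sup>2 \<ge> 0\<close>
  over all automorphisms \<open>\<sigma>\<close>, edge-transitivity makes every edge of \<open>C\<close> contribute the same
  edge-orbit sum, which double counting identifies with \<open>vAv\<close>, and vertex-transitivity makes
  every vertex contribute the same multiple of \<open>vv\<close>. This gives
  \<open>(\<omega> - 1) vAv + k vv \<ge> 0\<close>, so every eigenvalue of \<open>A\<close> is at least \<open>-k/(\<omega> - 1)\<close>.
  When \<open>\<alpha>\<omega> = n\<close>, the indicator of a maximum independent set minus \<open>1/\<omega>\<close> attains equality;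
  a vector on which a positive semidefinite form vanishes lies in its kernel, so it is an
  eigenvector of \<open>A\<close> for \<open>-k/(\<omega> - 1)\<close>.\<close>

definition automorphisms :: "('n \<Rightarrow> 'n \<Rightarrow> bool) \<Rightarrow> ('n \<Rightarrow> 'n) set" where
  "automorphisms E = {\<sigma>. automorphism E \<sigma>}"

lemma automorphism_comp:
  "automorphism E \<sigma> \<Longrightarrow> automorphism E \<rho> \<Longrightarrow> automorphism E (\<sigma> \<circ> \<rho>)"
  unfolding automorphism_def by (auto intro: bij_comp)

lemma automorphism_inv:
  assumes "automorphism E \<rho>"
  shows "automorphism E (inv \<rho>)"
proof -
  have "bij \<rho>" and adj: "\<And>x y. E (\<rho> x) (\<rho> y) \<longleftrightarrow> E x y"
    using assms by (auto simp: automorphism_def)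
  then show ?thesis
    using adj[of "inv \<rho> x" "inv \<rho> y" for x y]
    by (simp add: automorphism_def bij_imp_bij_inv bij_is_surj surj_f_inv_f)
qed

lemma sum_automorphisms_comp_right:
  assumes "automorphism E \<rho>"
  shows "(\<Sum>\<sigma>\<in>automorphisms E. F (\<sigma> \<circ> \<rho>)) = (\<Sum>\<sigma>\<in>automorphisms E. F \<sigma>)"
proof (rule sum.reindex_bij_betw)
  have "bij \<rho>" using assms by (simp add: automorphism_def)
  then have inv: "\<rho> \<circ> inv \<rho> = id" "inv \<rho> \<circ> \<rho> = id"
    using surj_iff[THEN iffD1, OF bij_is_surj] inj_iff[THEN iffD1, OF bij_is_inj] by blast+
  show "bij_betw (\<lambda>\<sigma>. \<sigma> \<circ> \<rho>) (automorphisms E) (automorphisms E)"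
  proof (rule bij_betw_byWitness[where f'="\<lambda>\<sigma>. \<sigma> \<circ> inv \<rho>"])
    show "\<forall>\<sigma>\<in>automorphisms E. \<sigma> \<circ> \<rho> \<circ> inv \<rho> = \<sigma>"
         "\<forall>\<sigma>\<in>automorphisms E. \<sigma> \<circ> inv \<rho> \<circ> \<rho> = \<sigma>"
      by (simp_all add: comp_assoc inv)
    show "(\<lambda>\<sigma>. \<sigma> \<circ> \<rho>) ` automorphisms E \<subseteq> automorphisms E"
         "(\<lambda>\<sigma>. \<sigma> \<circ> inv \<rho>) ` automorphisms E \<subseteq> automorphisms E"
      using assms automorphism_inv[OF assms]
      by (auto simp: automorphisms_def intro: automorphism_comp)
  qed
qed

lemma card_automorphisms_pos: "card (automorphisms (E :: 'n::finite \<Rightarrow> 'n \<Rightarrow> bool)) > 0"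
proof -
  have "id \<in> automorphisms E" by (simp add: automorphisms_def automorphism_def)
  then show ?thesis using card_gt_0_iff[of "automorphisms E"] finite[of "automorphisms E"] by blast
qed

lemma vertex_transitive_regular:
  fixes E :: "'n::finite \<Rightarrow> 'n \<Rightarrow> bool"
  assumes "vertex_transitive E"
  shows "regular E (card {y. E x0 y})"
  unfolding regular_def
proof
  fix x
  obtain \<sigma> where \<sigma>: "automorphism E \<sigma>" "\<sigma> x0 = x"
    using assms unfolding vertex_transitive_def by blast
  then have "bij \<sigma>" and adj: "\<And>a b. E (\<sigma> a) (\<sigma> b) \<longleftrightarrow> E a b"
    by (auto simp: automorphism_def)
  have "\<sigma> ` {y. E x0 y} = {y. E x y}"
  proof (intro equalityI subsetI)
    fix y assume "y \<in> {y. E x y}"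
    moreover have "y = \<sigma> (inv \<sigma> y)"
      using \<open>bij \<sigma>\<close> by (simp add: bij_is_surj surj_f_inv_f)
    ultimately have "E x0 (inv \<sigma> y)"
      using \<sigma>(2) adj by (metis mem_Collect_eq)
    then show "y \<in> \<sigma> ` {y. E x0 y}"
      using \<open>y = \<sigma> (inv \<sigma> y)\<close> by blast
  qed (use \<sigma>(2) adj in auto)
  then show "card {y. E x y} = card {y. E x0 y}"
    using bij_betw_same_card[OF bij_betw_subset[OF \<open>bij \<sigma>\<close> subset_UNIV]] by metis
qed

lemma vertex_orbit_sum:
  fixes E :: "'n::finite \<Rightarrow> 'n \<Rightarrow> bool"
  assumes "vertex_transitive E"
  shows "real CARD('n) * (\<Sum>\<sigma>\<in>automorphisms E. g (\<sigma> x))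
       = real (card (automorphisms E)) * (\<Sum>z\<in>UNIV. g z)"
proof -
  let ?G = "automorphisms E"
  have orbit: "(\<Sum>\<sigma>\<in>?G. g (\<sigma> y)) = (\<Sum>\<sigma>\<in>?G. g (\<sigma> x))" for y
  proof -
    obtain \<rho> where \<rho>: "automorphism E \<rho>" "\<rho> y = x"
      using assms unfolding vertex_transitive_def by blast
    then show ?thesis
      using sum_automorphisms_comp_right[OF \<rho>(1), of "\<lambda>\<tau>. g (\<tau> y)"] by simp
  qed
  have "real CARD('n) * (\<Sum>\<sigma>\<in>?G. g (\<sigma> x)) = (\<Sum>y\<in>(UNIV::'n set). \<Sum>\<sigma>\<in>?G. g (\<sigma> x))"
    by simp
  also have "\<dots> = (\<Sum>y\<in>UNIV. \<Sum>\<sigma>\<in>?G. g (\<sigma> y))"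
    by (rule sum.cong[OF refl orbit[symmetric]])
  also have "\<dots> = (\<Sum>\<sigma>\<in>?G. \<Sum>y\<in>UNIV. g (\<sigma> y))"
    by (rule sum.swap)
  also have "\<dots> = (\<Sum>\<sigma>\<in>?G. \<Sum>z\<in>UNIV. g z)"
    by (intro sum.cong refl sum.reindex_bij_betw) (simp add: automorphisms_def automorphism_def)
  finally show ?thesis by simp
qed

lemma edge_orbit_sum:
  assumes "edge_transitive E" "E x y" "E u w"
    and sym: "\<And>a b. h a b = h b a"
  shows "(\<Sum>\<sigma>\<in>automorphisms E. h (\<sigma> u) (\<sigma> w)) = (\<Sum>\<sigma>\<in>automorphisms E. h (\<sigma> x) (\<sigma> y))"
proof -
  obtain \<rho> where \<rho>: "automorphism E \<rho>" "\<rho> ` {x, y} = {u, w}"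
    using assms unfolding edge_transitive_def by blast
  have "h (\<sigma> (\<rho> x)) (\<sigma> (\<rho> y)) = h (\<sigma> u) (\<sigma> w)" for \<sigma>
    using \<rho>(2) sym by (auto simp: doubleton_eq_iff)
  then show ?thesis
    using sum_automorphisms_comp_right[OF \<rho>(1), of "\<lambda>\<tau>. h (\<tau> x) (\<tau> y)"] by simp
qed

lemma regular_sum_neighbours:
  fixes E :: "'n::finite \<Rightarrow> 'n \<Rightarrow> bool"
  assumes "regular E k"
  shows "(\<Sum>j\<in>UNIV. if E i j then c else 0) = real k * c"
  using assms by (simp add: sum.If_cases regular_def)

definition adj_form :: "('n::finite \<Rightarrow> 'n \<Rightarrow> bool) \<Rightarrow> ('n \<Rightarrow> real) \<Rightarrow> real" where
  "adj_form E v = (\<Sum>i\<in>UNIV. \<Sum>j\<in>UNIV. if E i j then v i * v j else 0)"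

lemma adj_form_comp_automorphism:
  assumes "automorphism E \<sigma>"
  shows "adj_form E (v \<circ> \<sigma>) = adj_form E v"
proof -
  have "bij \<sigma>" and adj: "\<And>x y. E (\<sigma> x) (\<sigma> y) \<longleftrightarrow> E x y"
    using assms by (auto simp: automorphism_def)
  have "adj_form E (v \<circ> \<sigma>)
      = (\<Sum>i\<in>UNIV. \<Sum>j\<in>UNIV. if E (\<sigma> i) (\<sigma> j) then v (\<sigma> i) * v (\<sigma> j) else 0)"
    unfolding adj_form_def comp_def by (simp add: adj)
  also have "\<dots> = adj_form E v"
    unfolding adj_form_def
    using sum.reindex_bij_betw[OF \<open>bij \<sigma>\<close>, of "\<lambda>i. \<Sum>j\<in>UNIV. if E i j then v i * v j else 0"]
      sum.reindex_bij_betw[OF \<open>bij \<sigma>\<close>, of "\<lambda>j. if E (\<sigma> i) j then v (\<sigma> i) * v j else 0" for i]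
    by simp
  finally show ?thesis .
qed

lemma adj_form_orbit_sum:
  fixes E :: "'n::finite \<Rightarrow> 'n \<Rightarrow> bool"
  assumes "edge_transitive E" "regular E k" "E x0 y0"
  shows "real CARD('n) * real k * (\<Sum>\<sigma>\<in>automorphisms E. v (\<sigma> x0) * v (\<sigma> y0))
       = real (card (automorphisms E)) * adj_form E v"
proof -
  let ?G = "automorphisms E"
  let ?Se = "\<Sum>\<sigma>\<in>?G. v (\<sigma> x0) * v (\<sigma> y0)"
  have "real (card ?G) * adj_form E v = (\<Sum>\<sigma>\<in>?G. adj_form E (v \<circ> \<sigma>))"
    by (simp add: adj_form_comp_automorphism automorphisms_def)
  also have "\<dots> = (\<Sum>i\<in>UNIV. \<Sum>j\<in>UNIV. \<Sum>\<sigma>\<in>?G. if E i j then v (\<sigma> i) * v (\<sigma> j) else 0)"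
    unfolding adj_form_def comp_def by (subst sum.swap, subst sum.swap) (rule refl)
  also have "\<dots> = (\<Sum>i\<in>UNIV. \<Sum>j\<in>UNIV. if E i j then ?Se else 0)"
    using edge_orbit_sum[OF assms(1,3), of _ _ "\<lambda>a b. v a * v b"]
    by (intro sum.cong refl) (simp add: mult.commute)
  also have "\<dots> = real CARD('n) * real k * ?Se"
    by (simp add: regular_sum_neighbours[OF assms(2)])
  finally show ?thesis ..
qed

lemma clique_form_nonneg:
  fixes f :: "'n \<Rightarrow> real"
  assumes "simple_graph E" "clique E C" "finite C"
  shows "0 \<le> (\<Sum>x\<in>C. \<Sum>y\<in>C. if E x y then f x * f y else 0) + (\<Sum>x\<in>C. (f x)\<^sup>2)"
proof -
  have "0 \<le> (\<Sum>x\<in>C. f x)\<^sup>2" by simp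
  also have "\<dots> = (\<Sum>x\<in>C. \<Sum>y\<in>C. (if E x y then f x * f y else 0) + (if x = y then (f x)\<^sup>2 else 0))"
    unfolding power2_eq_square sum_product
    using assms(1,2) by (intro sum.cong refl) (auto simp: simple_graph_def clique_def)
  also have "\<dots> = (\<Sum>x\<in>C. \<Sum>y\<in>C. if E x y then f x * f y else 0) + (\<Sum>x\<in>C. (f x)\<^sup>2)"
    using assms(3) by (simp add: sum.distrib)
  finally show ?thesis .
qed

lemma clique_orbit_bound:
  fixes E :: "'n::finite \<Rightarrow> 'n \<Rightarrow> bool"
  assumes sg: "simple_graph E" and vt: "vertex_transitive E" and et: "edge_transitive E"
    and "E x0 y0" and cl: "clique E C"
  shows "0 \<le> real (card C) * (real (card C) - 1) * real CARD('n)
                * (\<Sum>\<sigma>\<in>automorphisms E. v (\<sigma> x0) * v (\<sigma> y0))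
            + real (card C) * real (card (automorphisms E)) * (\<Sum>i\<in>UNIV. (v i)\<^sup>2)"
proof -
  let ?G = "automorphisms E"
  define Se where "Se = (\<Sum>\<sigma>\<in>?G. v (\<sigma> x0) * v (\<sigma> y0))"
  define c where "c = real (card C)"
  have edge: "E x y \<Longrightarrow> (\<Sum>\<sigma>\<in>?G. v (\<sigma> x) * v (\<sigma> y)) = Se" for x y
    unfolding Se_def by (rule edge_orbit_sum[OF et \<open>E x0 y0\<close>]) simp_all
  have clique_row: "(\<Sum>y\<in>C. if E x y then Se else 0) = (c - 1) * Se" if "x \<in> C" for x
  proof -
    have "{y \<in> C. E x y} = C - {x}"
      using that sg cl by (auto simp: simple_graph_def clique_def)
    moreover have "1 \<le> card C"
      using that card_gt_0_iff[of C] by auto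
    ultimately show ?thesis
      using that sum.inter_filter[of C "\<lambda>_. Se" "E x", symmetric]
      by (simp add: c_def card_Diff_singleton of_nat_diff)
  qed
  have "0 \<le> (\<Sum>\<sigma>\<in>?G. (\<Sum>x\<in>C. \<Sum>y\<in>C. if E x y then v (\<sigma> x) * v (\<sigma> y) else 0)
                        + (\<Sum>x\<in>C. (v (\<sigma> x))\<^sup>2))"
    by (intro sum_nonneg clique_form_nonneg[OF sg cl]) simp
  also have "\<dots> = (\<Sum>x\<in>C. \<Sum>y\<in>C. \<Sum>\<sigma>\<in>?G. if E x y then v (\<sigma> x) * v (\<sigma> y) else 0)
                + (\<Sum>x\<in>C. \<Sum>\<sigma>\<in>?G. (v (\<sigma> x))\<^sup>2)"
    by (simp only: sum.distrib sum.swap[of _ ?G] sum.swap[of _ ?G C])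
  also have "(\<Sum>x\<in>C. \<Sum>y\<in>C. \<Sum>\<sigma>\<in>?G. if E x y then v (\<sigma> x) * v (\<sigma> y) else 0)
           = (\<Sum>x\<in>C. \<Sum>y\<in>C. if E x y then Se else 0)"
    by (intro sum.cong refl) (simp add: edge)
  also have "(\<Sum>x\<in>C. \<Sum>y\<in>C. if E x y then Se else 0) = c * (c - 1) * Se"
    by (simp add: clique_row c_def)
  finally have "0 \<le> real CARD('n) * (c * (c - 1) * Se + (\<Sum>x\<in>C. \<Sum>\<sigma>\<in>?G. (v (\<sigma> x))\<^sup>2))"
    by simp
  also have "\<dots> = c * (c - 1) * real CARD('n) * Se + c * real (card ?G) * (\<Sum>i\<in>UNIV. (v i)\<^sup>2)"
    using vertex_orbit_sum[OF vt, of "\<lambda>z. (v z)\<^sup>2"]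
    by (simp add: distrib_left sum_distrib_left c_def mult.assoc)
  finally show ?thesis unfolding Se_def c_def .
qed

lemma adj_form_clique_bound:
  fixes E :: "'n::finite \<Rightarrow> 'n \<Rightarrow> bool"
  assumes sg: "simple_graph E" and vt: "vertex_transitive E" and et: "edge_transitive E"
    and reg: "regular E k" and cl: "clique E C" and "C \<noteq> {}"
  shows "0 \<le> (real (card C) - 1) * adj_form E v + real k * (\<Sum>i\<in>UNIV. (v i)\<^sup>2)"
proof (cases "has_edge E")
  case False
  then have "adj_form E v = 0" by (simp add: adj_form_def has_edge_def)
  then show ?thesis by (simp add: sum_nonneg)
next
  case True
  then obtain x0 y0 where e: "E x0 y0" by (auto simp: has_edge_def)
  define Se where "Se = (\<Sum>\<sigma>\<in>automorphisms E. v (\<sigma> x0) * v (\<sigma> y0))"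
  define c where "c = real (card C)"
  define G where "G = real (card (automorphisms E))"
  define N where "N = (\<Sum>i\<in>UNIV. (v i)\<^sup>2)"
  have cG: "c * G > 0"
    using \<open>C \<noteq> {}\<close> card_automorphisms_pos[of E] by (simp add: c_def G_def card_gt_0_iff)
  have "0 \<le> real k * (c * (c - 1) * real CARD('n) * Se + c * G * N)"
    using clique_orbit_bound[OF sg vt et e cl, of v]
    unfolding Se_def c_def G_def N_def by (intro mult_nonneg_nonneg) simp_all
  also have "\<dots> = c * (c - 1) * (real CARD('n) * real k * Se) + c * G * (real k * N)"
    by (simp add: algebra_simps)
  also have "\<dots> = (c * G) * ((c - 1) * adj_form E v + real k * N)"
    unfolding Se_def adj_form_orbit_sum[OF et reg e] G_def by (simp add: algebra_simps)
  finally have "0 \<le> (c - 1) * adj_form E v + real k * N"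
    using cG by (simp add: zero_le_mult_iff)
  then show ?thesis unfolding c_def N_def .
qed

lemma adjacency_matrix_mult_nth:
  "(adjacency_matrix E *v x) $ i = (\<Sum>j\<in>UNIV. if E i j then x $ j else 0)"
  by (auto simp: matrix_vector_mult_def adjacency_matrix_def intro!: sum.cong)

lemma inner_adjacency_matrix:
  "x \<bullet> (adjacency_matrix E *v x) = adj_form E (\<lambda>i. x $ i)"
  unfolding inner_vec_def adjacency_matrix_mult_nth adj_form_def
  by (simp add: sum_distrib_left if_distrib cong: if_cong)

lemma adjacency_matrix_self_adjoint:
  assumes "simple_graph E"
  shows "(adjacency_matrix E *v x) \<bullet> y = x \<bullet> (adjacency_matrix E *v y)"
proof -
  have "(adjacency_matrix E *v x) \<bullet> y = (\<Sum>i\<in>UNIV. \<Sum>j\<in>UNIV. if E i j then x $ j * y $ i else 0)"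
    unfolding inner_vec_def adjacency_matrix_mult_nth by (auto simp: sum_distrib_right intro!: sum.cong)
  also have "\<dots> = (\<Sum>j\<in>UNIV. \<Sum>i\<in>UNIV. if E j i then x $ j * y $ i else 0)"
    using assms by (subst sum.swap) (auto simp: simple_graph_def intro!: sum.cong)
  also have "\<dots> = x \<bullet> (adjacency_matrix E *v y)"
    unfolding inner_vec_def adjacency_matrix_mult_nth by (auto simp: sum_distrib_left intro!: sum.cong)
  finally show ?thesis .
qed

lemma finite_adj_eigenvalues:
  assumes "simple_graph E"
  shows "finite {l. adj_eigenvalue E l}"
proof -
  let ?A = "adjacency_matrix E"
  let ?L = "{l. adj_eigenvalue E l}"
  define f where "f l = (SOME x. x \<noteq> 0 \<and> ?A *v x = l *\<^sub>R x)" for l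
  have f: "f l \<noteq> 0" "?A *v f l = l *\<^sub>R f l" if "l \<in> ?L" for l
    using someI_ex[of "\<lambda>x. x \<noteq> 0 \<and> ?A *v x = l *\<^sub>R x"] that
    unfolding f_def adj_eigenvalue_def by auto
  have "inj_on f ?L"
  proof (rule inj_onI)
    fix a b assume "a \<in> ?L" "b \<in> ?L" "f a = f b"
    then have "a *\<^sub>R f a = b *\<^sub>R f a" using f by metis
    then show "a = b" using f(1)[OF \<open>a \<in> ?L\<close>] by simp
  qed
  moreover have "pairwise orthogonal (f ` ?L)"
  proof (rule pairwiseI)
    fix x y assume "x \<in> f ` ?L" "y \<in> f ` ?L" "x \<noteq> y"
    then obtain a b where ab: "a \<in> ?L" "b \<in> ?L" "f a \<noteq> f b" and "x = f a" "y = f b"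
      by blast
    have "a * (f a \<bullet> f b) = (?A *v f a) \<bullet> f b" using f(2)[OF ab(1)] by simp
    also have "\<dots> = f a \<bullet> (?A *v f b)" by (rule adjacency_matrix_self_adjoint[OF assms])
    also have "\<dots> = b * (f a \<bullet> f b)" using f(2)[OF ab(2)] by simp
    finally show "orthogonal x y"
      using ab(3) \<open>x = f a\<close> \<open>y = f b\<close> by (auto simp: orthogonal_def)
  qed
  then have "finite (f ` ?L)" by (rule pairwise_orthogonal_imp_finite)
  ultimately show ?thesis by (rule finite_imageD[rotated])
qed

lemma self_adjoint_nonneg_kernel:
  fixes f :: "'a::real_inner \<Rightarrow> 'a"
  assumes "linear f" and adj: "\<And>x y. f x \<bullet> y = x \<bullet> f y"
    and nonneg: "\<And>x. 0 \<le> f x \<bullet> x" and "f a \<bullet> a = 0"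
  shows "f a = 0"
proof -
  define r where "r = f a"
  have expand: "f (a - t *\<^sub>R r) \<bullet> (a - t *\<^sub>R r) = t\<^sup>2 * (f r \<bullet> r) - 2 * t * (r \<bullet> r)" for t
    using assms(4) adj[of r a]
    by (simp add: linear_diff[OF assms(1)] linear_scale[OF assms(1)] inner_diff_left
        inner_diff_right r_def power2_eq_square algebra_simps inner_commute[of a])
  have "r \<bullet> r = 0"
  proof (rule ccontr)
    assume "r \<bullet> r \<noteq> 0"
    then have pos: "r \<bullet> r > 0" by (simp add: order_le_neq_trans)
    define t where "t = (r \<bullet> r) / (f r \<bullet> r + 1)"
    have "t > 0" "t * (f r \<bullet> r) < r \<bullet> r"
      using pos nonneg[of r] by (simp_all add: t_def field_simps)
    then have "t * (f r \<bullet> r) - 2 * (r \<bullet> r) < 0"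
      using pos by linarith
    then have "t * (t * (f r \<bullet> r) - 2 * (r \<bullet> r)) < 0"
      using \<open>t > 0\<close> by (rule mult_pos_neg[rotated])
    moreover have "t * (t * (f r \<bullet> r) - 2 * (r \<bullet> r)) = t\<^sup>2 * (f r \<bullet> r) - 2 * t * (r \<bullet> r)"
      by (simp add: power2_eq_square algebra_simps)
    ultimately show False
      using nonneg[of "a - t *\<^sub>R r"] expand[of t] by linarith
  qed
  then show ?thesis by (simp add: r_def)
qed

lemma adj_eigenvalue_lower_bound:
  assumes "w > 0"
    and bound: "\<And>x. 0 \<le> w * (x \<bullet> (adjacency_matrix E *v x)) + c * (x \<bullet> x)"
    and "adj_eigenvalue E l"
  shows "- c / w \<le> l"
proof -
  obtain x where x: "x \<noteq> 0" "adjacency_matrix E *v x = l *\<^sub>R x"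
    using assms(3) unfolding adj_eigenvalue_def by blast
  then have "0 \<le> (w * l + c) * (x \<bullet> x)"
    using bound[of x] by (simp add: algebra_simps)
  moreover have "x \<bullet> x > 0"
    using x(1) by simp
  ultimately have "0 \<le> w * l + c"
    by (simp add: zero_le_mult_iff)
  then show ?thesis
    using \<open>w > 0\<close> by (simp add: field_simps)
qed

lemma adj_eigenvalue_of_form_zero:
  assumes "simple_graph E" and "w > 0"
    and bound: "\<And>x. 0 \<le> w * (x \<bullet> (adjacency_matrix E *v x)) + c * (x \<bullet> x)"
    and "a \<noteq> 0" and tight: "w * (a \<bullet> (adjacency_matrix E *v a)) + c * (a \<bullet> a) = 0"
  shows "adj_eigenvalue E (- c / w)"
proof -
  let ?A = "adjacency_matrix E"
  let ?f = "\<lambda>x. w *\<^sub>R (?A *v x) + c *\<^sub>R x"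
  have "?f a = 0"
  proof (rule self_adjoint_nonneg_kernel[of ?f])
    show "linear ?f"
      using matrix_vector_mul_linear[of ?A] unfolding linear_iff by (simp add: algebra_simps)
  next
    show "?f x \<bullet> y = x \<bullet> ?f y" for x y
      using adjacency_matrix_self_adjoint[OF assms(1), of x y]
      by (simp add: inner_add_left inner_add_right)
  qed (use bound tight in \<open>simp_all add: inner_add_right inner_commute\<close>)
  then have "w *\<^sub>R (?A *v a) = - (c *\<^sub>R a)"
    by (simp only: eq_neg_iff_add_eq_0)
  moreover have "?A *v a = (1 / w) *\<^sub>R (w *\<^sub>R (?A *v a))"
    using \<open>w > 0\<close> by simp
  ultimately have "?A *v a = (- c / w) *\<^sub>R a"
    by simp
  then show ?thesis
    using \<open>a \<noteq> 0\<close> unfolding adj_eigenvalue_def by blast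
qed

lemma smallest_eigenvalue_eqI:
  assumes "simple_graph E" and "w > 0"
    and bound: "\<And>x. 0 \<le> w * (x \<bullet> (adjacency_matrix E *v x)) + c * (x \<bullet> x)"
    and "a \<noteq> 0" and "w * (a \<bullet> (adjacency_matrix E *v a)) + c * (a \<bullet> a) = 0"
  shows "smallest_eigenvalue E = - c / w"
  unfolding smallest_eigenvalue_def
  using adj_eigenvalue_lower_bound[OF assms(2) bound] adj_eigenvalue_of_form_zero[OF assms]
  by (intro Min_eqI finite_adj_eigenvalues[OF assms(1)]) auto

lemma adj_form_shifted_indicator:
  fixes E :: "'n::finite \<Rightarrow> 'n \<Rightarrow> bool"
  assumes "simple_graph E" and reg: "regular E k" and "independent_set E S"
  shows "adj_form E (\<lambda>i. (if i \<in> S then 1 else 0) - c)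
       = c\<^sup>2 * real CARD('n) * real k - 2 * c * real (card S) * real k"
proof -
  define s where "s i = (if i \<in> S then 1 else (0::real))" for i
  have card_S: "(\<Sum>i\<in>UNIV. s i) = real (card S)"
    unfolding s_def by (simp add: sum.If_cases)
  have row: "(\<Sum>j\<in>UNIV. if E i j then s i else 0) = real k * s i" for i
    by (rule regular_sum_neighbours[OF reg])
  have col: "(\<Sum>i\<in>UNIV. if E i j then s j else 0) = real k * s j" for j
  proof -
    have "(\<Sum>i\<in>UNIV. if E i j then s j else 0) = (\<Sum>i\<in>UNIV. if E j i then s j else 0)"
      using assms(1) by (intro sum.cong refl) (auto simp: simple_graph_def)
    then show ?thesis by (simp add: regular_sum_neighbours[OF reg])
  qed
  have "adj_form E (\<lambda>i. s i - c)
      = (\<Sum>i\<in>UNIV. \<Sum>j\<in>UNIV. (if E i j then s i * s j else 0) - c * (if E i j then s i else 0)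
          - c * (if E i j then s j else 0) + c\<^sup>2 * (if E i j then 1 else 0))"
    unfolding adj_form_def by (intro sum.cong refl) (simp add: algebra_simps power2_eq_square)
  also have "\<dots> = (\<Sum>i\<in>UNIV. \<Sum>j\<in>UNIV. if E i j then s i * s j else 0)
      - c * (\<Sum>i\<in>UNIV. \<Sum>j\<in>UNIV. if E i j then s i else 0)
      - c * (\<Sum>i\<in>UNIV. \<Sum>j\<in>UNIV. if E i j then s j else 0)
      + c\<^sup>2 * (\<Sum>i\<in>UNIV. \<Sum>j\<in>UNIV. if E i j then 1 else 0)"
    by (simp add: sum.distrib sum_subtractf sum_distrib_left)
  also have "(\<Sum>i\<in>UNIV. \<Sum>j\<in>UNIV. if E i j then s i * s j else 0) = 0"
    using assms(3) by (intro sum.neutral ballI) (auto simp: s_def independent_set_def)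
  also have "(\<Sum>i\<in>UNIV. \<Sum>j\<in>UNIV. if E i j then s i else 0) = real k * real (card S)"
    by (simp add: row sum_distrib_left[symmetric] card_S)
  also have "(\<Sum>i\<in>UNIV. \<Sum>j\<in>UNIV. if E i j then s j else 0) = real k * real (card S)"
    by (subst sum.swap) (simp add: col sum_distrib_left[symmetric] card_S)
  also have "(\<Sum>i\<in>UNIV. \<Sum>j\<in>UNIV. if E i j then 1 else (0::real)) = real CARD('n) * real k"
    by (simp add: regular_sum_neighbours[OF reg])
  finally show ?thesis by (simp add: s_def algebra_simps)
qed

lemma sum_square_shifted_indicator:
  "(\<Sum>i\<in>(UNIV::'n::finite set). ((if i \<in> S then 1 else 0) - c)\<^sup>2)
     = real (card S) - 2 * c * real (card S) + c\<^sup>2 * real CARD('n)"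
proof -
  have "(\<Sum>i\<in>(UNIV::'n set). ((if i \<in> S then 1 else 0) - c)\<^sup>2)
      = (\<Sum>i\<in>(UNIV::'n set). (if i \<in> S then 1 else 0) - 2 * c * (if i \<in> S then 1 else 0) + c\<^sup>2)"
    by (intro sum.cong refl) (simp add: power2_eq_square algebra_simps)
  also have "\<dots> = real (card S) - 2 * c * real (card S) + c\<^sup>2 * real CARD('n)"
    by (simp add: sum.distrib sum_subtractf sum_distrib_left[symmetric] sum.If_cases)
  finally show ?thesis .
qed

lemma independent_set_tight_vector:
  fixes E :: "'n::finite \<Rightarrow> 'n \<Rightarrow> bool"
  assumes "simple_graph E" "regular E k" "independent_set E S"
    and card: "card S * m = CARD('n)" and "2 \<le> m"
  defines "a \<equiv> \<chi> i. (if i \<in> S then 1 else 0) - 1 / real m"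
  shows "a \<noteq> 0"
    and "(real m - 1) * (a \<bullet> (adjacency_matrix E *v a)) + real k * (a \<bullet> a) = 0"
proof -
  have "card S \<noteq> 0" using card by (metis mult_0 zero_less_card_finite less_irrefl)
  then have "card S < CARD('n)"
    using card \<open>2 \<le> m\<close> by (metis Suc_1 Suc_le_lessD mult.right_neutral nat_mult_less_cancel1 not_gr0)
  then have "S \<noteq> UNIV" by auto
  then obtain i where "i \<notin> S" by auto
  then have "a $ i \<noteq> 0" using \<open>2 \<le> m\<close> by (simp add: a_def)
  then show "a \<noteq> 0" by auto
  have n: "real CARD('n) = real (card S) * real m"
    using card by (metis of_nat_mult)
  have a_nth: "(\<lambda>i. a $ i) = (\<lambda>i. (if i \<in> S then 1 else 0) - 1 / real m)"
    by (simp add: a_def fun_eq_iff)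
  have "m > 0" using \<open>2 \<le> m\<close> by simp
  have "a \<bullet> (adjacency_matrix E *v a)
      = (1 / real m)\<^sup>2 * real CARD('n) * real k - 2 * (1 / real m) * real (card S) * real k"
    unfolding inner_adjacency_matrix a_nth by (rule adj_form_shifted_indicator[OF assms(1-3)])
  also have "\<dots> = - real k * real (card S) / real m"
    using \<open>m > 0\<close> by (simp add: n field_simps power2_eq_square)
  finally have Q: "a \<bullet> (adjacency_matrix E *v a) = - real k * real (card S) / real m" .
  have "a \<bullet> a
      = real (card S) - 2 * (1 / real m) * real (card S) + (1 / real m)\<^sup>2 * real CARD('n)"
    using sum_square_shifted_indicator[of S "1 / real m"]
    by (simp add: a_def inner_vec_def power2_eq_square)
  also have "\<dots> = real (card S) * (real m - 1) / real m"
    using \<open>m > 0\<close> by (simp add: n field_simps power2_eq_square)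
  finally have N: "a \<bullet> a = real (card S) * (real m - 1) / real m" .
  show "(real m - 1) * (a \<bullet> (adjacency_matrix E *v a)) + real k * (a \<bullet> a) = 0"
    unfolding Q N by (simp add: field_simps)
qed

lemma Max_card_attained:
  fixes P :: "'a::finite set \<Rightarrow> bool"
  assumes "P T"
  shows "\<exists>S. P S \<and> card S = Max {card S | S. P S}"
proof -
  have "{card S | S. P S} = card ` {S. P S}" by auto
  then have "Max {card S | S. P S} \<in> card ` {S. P S}"
    using assms by (metis Max_in empty_iff finite finite_imageI mem_Collect_eq image_is_empty)
  then show ?thesis by auto
qed

lemma card_le_Max_card:
  fixes P :: "'a::finite set \<Rightarrow> bool"
  assumes "P T"
  shows "card T \<le> Max {card S | S. P S}"
proof -
  have "{card S | S. P S} = card ` {S. P S}" by auto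
  then show ?thesis using assms by (auto intro: Max_ge)
qed

lemma clique_number_attained: "\<exists>C. clique E C \<and> card C = clique_number E"
  using Max_card_attained[of "clique E" "{}"] by (auto simp: clique_def clique_number_def)

lemma independence_number_attained:
  "\<exists>S. independent_set E S \<and> card S = independence_number E"
  using Max_card_attained[of "independent_set E" "{}"]
  by (auto simp: independent_set_def independence_number_def)

lemma two_le_clique_number:
  assumes "simple_graph E" and "E x y"
  shows "2 \<le> clique_number E"
proof -
  have "clique E {x, y}" and "x \<noteq> y"
    using assms by (auto simp: clique_def simple_graph_def)
  then show ?thesis
    using card_le_Max_card[of "clique E" "{x, y}"] by (simp add: clique_number_def)
qed

theorem mainTheorem9:
  fixes E :: "'n::finite \<Rightarrow> 'n \<Rightarrow> bool"
  assumes "simple_graph E"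
    and "has_edge E"
    and "vertex_transitive E"
    and "edge_transitive E"
    and "independence_number E * clique_number E = CARD('n)"
  shows "\<exists>k. regular E k \<and>
           smallest_eigenvalue E = - real k / (real (clique_number E) - 1)"
proof -
  obtain x0 y0 where e: "E x0 y0" using assms(2) by (auto simp: has_edge_def)
  define k where "k = card {y. E x0 y}"
  have reg: "regular E k" unfolding k_def by (rule vertex_transitive_regular[OF assms(3)])
  obtain C where C: "clique E C" "card C = clique_number E"
    using clique_number_attained by blast
  obtain S where S: "independent_set E S" "card S = independence_number E"
    using independence_number_attained by blast
  have "2 \<le> clique_number E" by (rule two_le_clique_number[OF assms(1) e])
  define w where "w = real (clique_number E) - 1"
  have "w > 0" using \<open>2 \<le> clique_number E\<close> by (simp add: w_def)
  have "C \<noteq> {}" using C(2) \<open>2 \<le> clique_number E\<close> by auto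
  have bound: "0 \<le> w * (x \<bullet> (adjacency_matrix E *v x)) + real k * (x \<bullet> x)" for x
    using adj_form_clique_bound[OF assms(1,3,4) reg C(1) \<open>C \<noteq> {}\<close>, of "\<lambda>i. x $ i"]
    unfolding inner_adjacency_matrix C(2) w_def by (simp add: inner_vec_def power2_eq_square)
  have "card S * clique_number E = CARD('n)" using S(2) assms(5) by simp
  note tight = independent_set_tight_vector[OF assms(1) reg S(1) this \<open>2 \<le> clique_number E\<close>]
  have "smallest_eigenvalue E = - real k / w"
    using smallest_eigenvalue_eqI[OF assms(1) \<open>w > 0\<close> bound tight(1)] tight(2)
    by (simp add: w_def)
  then show ?thesis using reg by (auto simp: w_def)
qed

end
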